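(* Let $K$ be a simplex in a topological vector space $F$ and let $T:K\to 2^{K}$ be a correspondence. Assume that for each neighborhood $V$ of the origin in $F$ there is a weakly naturally quasiconvex correspondence $T^{V}:K\to 2^{K}$ such that $\mathrm{Gr}(T^{V})\subset \mathrm{cl}\,\mathrm{Gr}(T_V)$. Then there exists $x^*\in K$ such that $x^*\in\overline{T}(x^* )$.
   Context: A simplex is the convex hull of a finite affinely independent set. For a correspondence $T:X\to 2^Y$, $\mathrm{Gr}(T)=\{(x,y)\in X\times Y: y\in T(x)\}$; $\overline{T}(x)=\{y\in Y:(x,y)\in \mathrm{cl}_{X\times Y}\mathrm{Gr}(T)\}$; for $V\subset F$, $T_V:X\to 2^Y$ is defined by $T_V(x)=(T(x)+V)\cap Y$. $\Delta_{n-1}=\{(\lambda_1,\dots,\lambda_n)\in\mathbb{R}^n:\sum_i\lambda_i=1,\ \lambda_i\ge 0\}$. Weakly naturally quasiconvex (WNQ): let $X,Y$ be nonempty convex subsets of topological vector spaces. A correspondence $T:X\to 2^{Y}$ is weakly naturally quasiconvex if for each $n\in\mathbb{N}$ and each finite set $\{x_1,\dots,x_n\}\subset X$ there exist $y_i\in T(x_i)$ ($i=1,\dots,n$) and a bijection $g:\Delta_{n-1}\to\Delta_{n-1}$ (depending on $x_1,\dots,x_n$) of the form $g(\lambda_1,\dots,\lambda_n)=(g_1(\lambda_1),\dots,g_n(\lambda_n))$, where each $g_i:[0,1]\to[0,1]$ is continuous with $g_i(0)=0$ and $g_i(1)=1$, such that for every $(\lambda_1,\dots,\lambda_n)\in\Delta_{n-1}$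 we have $\sum_{i=1}^n g_i(\lambda_i)y_i\in T\big(\sum_{i=1}^n\lambda_i x_i\big)$. *)

theory Defs
  imports "HOL-Analysis.Analysis"
begin

definition tvs :: "'a::{real_vector,topological_space} itself \<Rightarrow> bool" where
  "tvs _ \<longleftrightarrow>
     continuous_on UNIV (\<lambda>p::'a \<times> 'a. fst p + snd p) \<and>
     continuous_on UNIV (\<lambda>p::real \<times> 'a. fst p *\<^sub>R snd p)"

definition is_simplex :: "'a::real_vector set \<Rightarrow> bool" where
  "is_simplex K \<longleftrightarrow> (\<exists>S. finite S \<and> S \<noteq> {} \<and> \<not> affine_dependent S \<and> K = convex hull S)"

definition Gr :: "'a set \<Rightarrow> ('a \<Rightarrow> 'b set) \<Rightarrow> ('a \<times> 'b) set" where
  "Gr X T = {(x, y). x \<in> X \<and> y \<in> T x}"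

definition clGr :: "'a::topological_space set \<Rightarrow> 'b::topological_space set
                   \<Rightarrow> ('a \<Rightarrow> 'b set) \<Rightarrow> ('a \<times> 'b) set" where
  "clGr X Y T = closure (Gr X T) \<inter> (X \<times> Y)"

definition Tbar :: "'a::topological_space set \<Rightarrow> 'b::topological_space set
                   \<Rightarrow> ('a \<Rightarrow> 'b set) \<Rightarrow> 'a \<Rightarrow> 'b set" where
  "Tbar X Y T x = {y \<in> Y. (x, y) \<in> clGr X Y T}"

definition TV :: "'b::plus set \<Rightarrow> ('a \<Rightarrow> 'b set) \<Rightarrow> 'b set \<Rightarrow> 'a \<Rightarrow> 'b set" where
  "TV Y T V x = {a + v | a v. a \<in> T x \<and> v \<in> V} \<inter> Y"

definition std_simplex :: "nat \<Rightarrow> (nat \<Rightarrow> real) set" where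
  "std_simplex n = {l. (\<forall>i<n. 0 \<le> l i) \<and> (\<Sum>i<n. l i) = 1 \<and> (\<forall>i\<ge>n. l i = 0)}"

definition WNQ :: "'a::real_vector set \<Rightarrow> 'b::real_vector set \<Rightarrow> ('a \<Rightarrow> 'b set) \<Rightarrow> bool" where
  "WNQ X Y T \<longleftrightarrow>
    (\<forall>n::nat. \<forall>x::nat \<Rightarrow> 'a. n \<ge> 1 \<and> (\<forall>i<n. x i \<in> X) \<longrightarrow>
      (\<exists>(y::nat \<Rightarrow> 'b) (g::nat \<Rightarrow> real \<Rightarrow> real).
         (\<forall>i<n. y i \<in> T (x i)) \<and>
         (\<forall>i<n. continuous_on {0..1} (g i) \<and> g i ` {0..1} \<subseteq> {0..1} \<and>
                g i 0 = 0 \<and> g i 1 = 1) \<and>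
         bij_betw (\<lambda>l i. if i < n then g i (l i) else 0) (std_simplex n) (std_simplex n) \<and>
         (\<forall>l\<in>std_simplex n. (\<Sum>i<n. g i (l i) *\<^sub>R y i) \<in> T (\<Sum>i<n. l i *\<^sub>R x i))))"

end

theory Submission
  imports Defs
begin

text \<open>Weak natural quasiconvexity is less weak than it looks. Once the vertices of the
  simplex are listed with at least three entries \<open>x\<^sub>i\<close>, the componentwise bijection \<open>g\<close>
  of the standard simplex must satisfy \<open>\<Sum>\<^sub>i g\<^sub>i(\<lambda>\<^sub>i) = 1\<close>, which makes every \<open>g\<^sub>i\<close>
  additive on \<open>[0,1]\<close> and hence the identity. So a WNQ self-map \<open>R\<close> of the simplex sends
  \<open>\<Sum>\<^sub>i \<lambda>\<^sub>i x\<^sub>i\<close> to a set containing \<open>\<Sum>\<^sub>i \<lambda>\<^sub>i y\<^sub>i\<close> for fixed \<open>y\<^sub>i \<in> R(x\<^sub>i)\<close>. Writing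
  \<open>y\<^sub>i = \<Sum>\<^sub>j \<mu>\<^sub>i\<^sub>j x\<^sub>j\<close>, a stationary distribution \<open>\<nu>\<close> of the stochastic matrix \<open>\<mu>\<close> gives
  \<open>\<Sum>\<^sub>i \<nu>\<^sub>i y\<^sub>i = \<Sum>\<^sub>j \<nu>\<^sub>j x\<^sub>j\<close>, a fixed point of \<open>R\<close>.

  If \<open>\<overline>T\<close> had no fixed point, the closed graph of \<open>T\<close> would miss the diagonal over the
  compact simplex, and by compactness so would the closed graph of \<open>T\<^sub>V\<close> for some
  neighbourhood \<open>V\<close> of 0; but it contains the fixed point of \<open>T\<^sup>V\<close>.\<close>

lemma additive_on_unit_interval_eq_id:
  fixes h :: "real \<Rightarrow> real"
  assumes add: "\<And>a b. 0 \<le> a \<Longrightarrow> 0 \<le> b \<Longrightarrow> a + b \<le> 1 \<Longrightarrow> h (a + b) = h a + h b"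
    and nonneg: "\<And>t. 0 \<le> t \<Longrightarrow> t \<le> 1 \<Longrightarrow> 0 \<le> h t"
    and one: "h 1 = 1"
    and t: "0 \<le> t" "t \<le> 1"
  shows "h t = t"
proof -
  have mono: "h a \<le> h b" if "0 \<le> a" "a \<le> b" "b \<le> 1" for a b
    using add[of a "b - a"] nonneg[of "b - a"] that by simp
  have multiple: "h (real k * s) = real k * h s" if "0 \<le> s" "real k * s \<le> 1" for k s
    using that
  proof (induction k)
    case 0
    then show ?case using add[of 0 0] by simp
  next
    case (Suc k)
    then have "h (real k * s) = real k * h s" by (simp add: algebra_simps)
    moreover have "h (real k * s + s) = h (real k * s) + h s"
      using add[of "real k * s" s] Suc.prems by (simp add: algebra_simps)
    ultimately show ?case by (simp add: algebra_simps)
  qed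
  have fraction: "h (real k / real m) = real k / real m" if "0 < m" "k \<le> m" for k m
  proof -
    have "real m * h (1 / real m) = 1"
      using multiple[of "1 / real m" m] one that by simp
    then show ?thesis
      using multiple[of "1 / real m" k] that by (simp add: field_simps)
  qed
  have lower: "s \<le> h s" if s: "0 \<le> s" "s \<le> 1" for s
  proof (rule field_le_epsilon)
    fix e :: real assume "0 < e"
    then obtain m :: nat where m: "1 / e < real m" using reals_Archimedean2 by blast
    moreover have "0 < 1 / e" using \<open>0 < e\<close> by simp
    ultimately have "0 < m" by linarith
    then have "1 / real m < e" using m \<open>0 < e\<close> by (simp add: field_simps)
    define k where "k = nat \<lfloor>real m * s\<rfloor>"
    have "real k = of_int \<lfloor>real m * s\<rfloor>" unfolding k_def using s by simp
    then have k: "real k \<le> real m * s" "real m * s < real k + 1" by linarith+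
    have "real k \<le> real m" using k(1) s mult_left_le[of s "real m"] by linarith
    then have "k \<le> m" by simp
    have "(real m * s - 1) / real m < real k / real m"
      using k \<open>0 < m\<close> by (intro divide_strict_right_mono) auto
    then have "s - 1 / real m < real k / real m"
      using \<open>0 < m\<close> by (simp add: diff_divide_distrib)
    moreover have "real k / real m \<le> h s"
      using mono[of "real k / real m" s] fraction[OF \<open>0 < m\<close> \<open>k \<le> m\<close>] k s \<open>0 < m\<close>
      by (simp add: field_simps)
    ultimately show "s \<le> h s + e" using \<open>1 / real m < e\<close> by linarith
  qed
  have "h t + h (1 - t) = 1" using add[of t "1 - t"] one t by simp
  then show ?thesis using lower[of t] lower[of "1 - t"] t by linarith
qed

lemma std_simplex_bounds:
  assumes "l \<in> std_simplex n"
  shows "0 \<le> l j" "l j \<le> 1"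
proof -
  have l: "\<forall>i<n. 0 \<le> l i" "(\<Sum>i<n. l i) = 1" "\<forall>i\<ge>n. l i = 0"
    using assms unfolding std_simplex_def by auto
  show "0 \<le> l j" using l by (cases "j < n") auto
  show "l j \<le> 1"
  proof (cases "j < n")
    case True
    have "l j \<le> (\<Sum>i<n. l i)" by (rule member_le_sum) (use l True in auto)
    then show ?thesis using l by simp
  qed (use l in auto)
qed

lemma coordinatewise_sum_three_coordinates:
  fixes g :: "nat \<Rightarrow> real \<Rightarrow> real"
  assumes sum_eq: "\<And>l. l \<in> std_simplex n \<Longrightarrow> (\<Sum>i<n. g i (l i)) = 1"
    and g0: "\<And>i. i < n \<Longrightarrow> g i 0 = 0"
    and ijk: "i < n" "j < n" "k < n" "i \<noteq> j" "i \<noteq> k" "j \<noteq> k"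
    and ab: "0 \<le> a" "0 \<le> b" "a + b \<le> 1"
  shows "g i a + g j b + g k (1 - a - b) = 1"
proof -
  define l where "l m = (if m = i then a else if m = j then b else if m = k then 1 - a - b else 0)" for m
  have "(\<Sum>m<n. l m) = (\<Sum>m<n. (if m = i then a else 0) + (if m = j then b else 0)
                                 + (if m = k then 1 - a - b else 0))"
    by (rule sum.cong) (use ijk in \<open>auto simp: l_def\<close>)
  also have "\<dots> = 1" using ijk by (simp add: sum.distrib)
  finally have "l \<in> std_simplex n" using ijk ab unfolding std_simplex_def l_def by auto
  have "(\<Sum>m<n. g m (l m)) = (\<Sum>m<n. (if m = i then g i a else 0) + (if m = j then g j b else 0)
                                     + (if m = k then g k (1 - a - b) else 0))"
    by (rule sum.cong) (use ijk g0 in \<open>auto simp: l_def\<close>)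
  also have "\<dots> = g i a + g j b + g k (1 - a - b)" using ijk by (simp add: sum.distrib)
  finally show ?thesis using sum_eq[OF \<open>l \<in> std_simplex n\<close>] by simp
qed

lemma coordinatewise_sum_eq_1_imp_id:
  fixes g :: "nat \<Rightarrow> real \<Rightarrow> real"
  assumes sum_eq: "\<And>l. l \<in> std_simplex n \<Longrightarrow> (\<Sum>i<n. g i (l i)) = 1"
    and g0: "\<And>i. i < n \<Longrightarrow> g i 0 = 0"
    and range: "\<And>i. i < n \<Longrightarrow> g i ` {0..1} \<subseteq> {0..1}"
    and "3 \<le> n" "i < n" "0 \<le> t" "t \<le> 1"
  shows "g i t = t"
proof -
  obtain j k where jk: "j < n" "k < n" "i \<noteq> j" "i \<noteq> k" "j \<noteq> k"
  proof -
    consider "i = 0" | "i = 1" | "2 \<le> i" by linarith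
    then show ?thesis
    proof cases
      case 1
      then show ?thesis using that[of 1 2] \<open>3 \<le> n\<close> by simp
    next
      case 2
      then show ?thesis using that[of 0 2] \<open>3 \<le> n\<close> by simp
    next
      case 3
      then show ?thesis using that[of 0 1] \<open>3 \<le> n\<close> \<open>i < n\<close> by simp
    qed
  qed
  note three = coordinatewise_sum_three_coordinates[of n g, OF sum_eq g0]
  have gj: "g j b = g i b" if "0 \<le> b" "b \<le> 1" for b
    using three[of j i k b 0] three[of i j k b 0] jk \<open>i < n\<close> that g0 by simp
  show ?thesis
  proof (rule additive_on_unit_interval_eq_id[where h = "g i"])
    fix a b :: real assume "0 \<le> a" "0 \<le> b" "a + b \<le> 1"
    then show "g i (a + b) = g i a + g i b"
      using three[of i j k a b] three[of i j k "a + b" 0] jk \<open>i < n\<close> g0 gj[of b]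
      by (simp add: algebra_simps)
  next
    fix s :: real assume "0 \<le> s" "s \<le> 1"
    then show "0 \<le> g i s" using range[OF \<open>i < n\<close>] by (auto simp: image_subset_iff)
  next
    show "g i 1 = 1" using three[of i j k 1 0] jk \<open>i < n\<close> g0 by simp
  qed fact+
qed

lemma WNQ_imp_convex_combinations:
  assumes "WNQ X Y T" "3 \<le> n" "\<forall>i<n. x i \<in> X"
  obtains y where "\<forall>i<n. y i \<in> T (x i)"
    "\<forall>l\<in>std_simplex n. (\<Sum>i<n. l i *\<^sub>R y i) \<in> T (\<Sum>i<n. l i *\<^sub>R x i)"
proof -
  from \<open>3 \<le> n\<close> have "1 \<le> n" by simp
  then obtain y g where y: "\<forall>i<n. y i \<in> T (x i)"
    and g: "\<forall>i<n. continuous_on {0..1} (g i) \<and> g i ` {0..1} \<subseteq> {0..1} \<and> g i 0 = 0 \<and> g i 1 = 1"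
    and bij: "bij_betw (\<lambda>l i. if i < n then g i (l i) else 0) (std_simplex n) (std_simplex n)"
    and comb: "\<forall>l\<in>std_simplex n. (\<Sum>i<n. g i (l i) *\<^sub>R y i) \<in> T (\<Sum>i<n. l i *\<^sub>R x i)"
    using assms(1,3) unfolding WNQ_def by blast
  have "(\<Sum>i<n. g i (l i)) = 1" if "l \<in> std_simplex n" for l
  proof -
    have "(\<lambda>i. if i < n then g i (l i) else 0) \<in> std_simplex n"
      using bij that unfolding bij_betw_def by blast
    then show ?thesis by (simp add: std_simplex_def)
  qed
  then have "g i t = t" if "i < n" "0 \<le> t" "t \<le> 1" for i t
    using coordinatewise_sum_eq_1_imp_id[of n g] g \<open>3 \<le> n\<close> that by blast
  then have "(\<Sum>i<n. g i (l i) *\<^sub>R y i) = (\<Sum>i<n. l i *\<^sub>R y i)" if "l \<in> std_simplex n" for l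
    using std_simplex_bounds[OF that] by (intro sum.cong) auto
  then show thesis using that y comb by simp
qed

lemma compact_std_simplex: "compact (std_simplex n)"
proof -
  define F where "F i = (if i < n then {0..1::real} else {0})" for i :: nat
  have "compactin (product_topology (\<lambda>i. euclidean) UNIV) (PiE UNIV F)"
    by (subst compactin_PiE) (auto simp: F_def compactin_euclidean_iff)
  then have "compact (PiE UNIV F)"
    by (simp add: euclidean_product_topology)
  moreover have "closed {l::nat \<Rightarrow> real. (\<Sum>i<n. l i) = 1}"
    by (rule closed_Collect_eq) (auto intro!: continuous_intros)
  moreover have "std_simplex n = PiE UNIV F \<inter> {l. (\<Sum>i<n. l i) = 1}"
  proof (intro set_eqI iffI)
    fix l assume l: "l \<in> std_simplex n"
    then have "l i \<in> F i" for i
      using std_simplex_bounds[OF l, of i] unfolding F_def std_simplex_def by auto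
    then show "l \<in> PiE UNIV F \<inter> {l. (\<Sum>i<n. l i) = 1}"
      using l unfolding PiE_UNIV_domain std_simplex_def by auto
  next
    fix l assume l: "l \<in> PiE UNIV F \<inter> {l. (\<Sum>i<n. l i) = 1}"
    then have li: "l i \<in> F i" for i unfolding PiE_UNIV_domain by auto
    have "0 \<le> l i" for i using li[of i] unfolding F_def by (auto split: if_splits)
    moreover have "l i = 0" if "n \<le> i" for i using li[of i] that unfolding F_def by auto
    ultimately show "l \<in> std_simplex n"
      using l unfolding std_simplex_def by auto
  qed
  ultimately show ?thesis by (simp add: compact_Int_closed)
qed

lemma convex_hull_image_lessThan:
  fixes x :: "nat \<Rightarrow> 'a::real_vector"
  shows "convex hull (x ` {..<n}) = (\<lambda>l. \<Sum>j<n. l j *\<^sub>R x j) ` std_simplex n"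
    (is "_ = ?R")
proof
  have "x ` {..<n} \<subseteq> ?R"
  proof
    fix w assume "w \<in> x ` {..<n}"
    then obtain k where k: "k < n" "w = x k" by auto
    define \<delta> where "\<delta> m = (if m = k then 1 else (0::real))" for m
    have "\<delta> \<in> std_simplex n" using k by (auto simp: std_simplex_def \<delta>_def)
    moreover have "(\<Sum>j<n. \<delta> j *\<^sub>R x j) = (\<Sum>j<n. if j = k then x k else 0)"
      by (rule sum.cong) (auto simp: \<delta>_def)
    ultimately have "\<delta> \<in> std_simplex n" "(\<Sum>j<n. \<delta> j *\<^sub>R x j) = w"
      using k by auto
    then show "w \<in> ?R" by blast
  qed
  moreover have "convex ?R"
  proof (rule convexI)
    fix p q :: 'a and u v :: real
    assume "p \<in> ?R" "q \<in> ?R" and uv: "0 \<le> u" "0 \<le> v" "u + v = 1"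
    then obtain \<mu>1 \<mu>2 where \<mu>: "\<mu>1 \<in> std_simplex n" "p = (\<Sum>j<n. \<mu>1 j *\<^sub>R x j)"
      "\<mu>2 \<in> std_simplex n" "q = (\<Sum>j<n. \<mu>2 j *\<^sub>R x j)" by auto
    define \<mu> where "\<mu> j = u * \<mu>1 j + v * \<mu>2 j" for j
    have "\<mu> \<in> std_simplex n"
      using \<mu> uv by (auto simp: std_simplex_def \<mu>_def sum.distrib sum_distrib_left[symmetric])
    moreover have "u *\<^sub>R p + v *\<^sub>R q = (\<Sum>j<n. \<mu> j *\<^sub>R x j)"
      by (simp add: \<mu> \<mu>_def scaleR_sum_right scaleR_add_left sum.distrib)
    ultimately show "u *\<^sub>R p + v *\<^sub>R q \<in> ?R" by blast
  qed
  ultimately show "convex hull (x ` {..<n}) \<subseteq> ?R" by (rule hull_minimal)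
next
  show "?R \<subseteq> convex hull (x ` {..<n})"
  proof
    fix z assume "z \<in> ?R"
    then obtain l where l: "l \<in> std_simplex n" "z = (\<Sum>j<n. l j *\<^sub>R x j)" by blast
    show "z \<in> convex hull (x ` {..<n})"
      unfolding l(2)
      by (rule convex_sum) (use l(1) in \<open>auto simp: std_simplex_def intro: hull_inc\<close>)
  qed
qed

text \<open>Cesaro averages of the orbit of a vertex under the Markov operator telescope,
  so they are stationary up to an error of order \<open>1/k\<close>.\<close>

lemma stochastic_matrix_almost_stationary:
  fixes \<mu> :: "nat \<Rightarrow> nat \<Rightarrow> real"
  assumes "1 \<le> n" and \<mu>: "\<And>i. i < n \<Longrightarrow> \<mu> i \<in> std_simplex n"
  obtains c where "c \<in> std_simplex n"
    "\<And>j. j < n \<Longrightarrow> \<bar>(\<Sum>i<n. c i * \<mu> i j) - c j\<bar> \<le> inverse (real (Suc k))"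
proof -
  define P where "P \<nu> j = (if j < n then (\<Sum>i<n. \<nu> i * \<mu> i j) else 0)" for \<nu> and j :: nat
  have P: "P \<nu> \<in> std_simplex n" if "\<nu> \<in> std_simplex n" for \<nu>
  proof -
    have "(\<Sum>j<n. P \<nu> j) = (\<Sum>i<n. \<nu> i * (\<Sum>j<n. \<mu> i j))"
      by (simp add: P_def sum_distrib_left) (rule sum.swap)
    also have "\<dots> = 1" using \<mu> that by (simp add: std_simplex_def)
    finally show ?thesis
      using std_simplex_bounds[OF that] std_simplex_bounds[OF \<mu>]
      by (auto simp: std_simplex_def P_def intro!: sum_nonneg)
  qed
  define p where "p t = (P ^^ t) (\<lambda>j. if j = 0 then 1 else 0)" for t
  have p: "p t \<in> std_simplex n" for t
  proof (induction t)
    case 0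
    show ?case using \<open>1 \<le> n\<close> by (simp add: p_def std_simplex_def)
  next
    case (Suc t)
    then show ?case by (simp add: p_def P)
  qed
  define c where "c j = (\<Sum>t\<le>k. p t j) / real (Suc k)" for j
  have "(\<Sum>j<n. c j) = (\<Sum>t\<le>k. \<Sum>j<n. p t j) / real (Suc k)"
    by (simp add: c_def sum_divide_distrib[symmetric]) (rule sum.swap)
  also have "\<dots> = 1" using p by (simp add: std_simplex_def)
  finally have "c \<in> std_simplex n" using p std_simplex_bounds[OF p]
    by (auto simp: std_simplex_def c_def intro!: sum_nonneg divide_nonneg_nonneg)
  moreover have "\<bar>(\<Sum>i<n. c i * \<mu> i j) - c j\<bar> \<le> inverse (real (Suc k))" if "j < n" for j
  proof -
    have "(\<Sum>i<n. c i * \<mu> i j) = (\<Sum>t\<le>k. P (p t) j) / real (Suc k)"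
      using that by (simp add: c_def P_def sum_divide_distrib sum_distrib_right) (rule sum.swap)
    then have "(\<Sum>i<n. c i * \<mu> i j) - c j = (\<Sum>t\<le>k. p (Suc t) j - p t j) / real (Suc k)"
      by (simp add: c_def p_def sum_subtractf diff_divide_distrib)
    also have "\<dots> = (p (Suc k) j - p 0 j) / real (Suc k)"
      by (simp only: sum_lessThan_telescope[where f = "\<lambda>t. p t j", symmetric] lessThan_Suc_atMost)
    finally show ?thesis
      using std_simplex_bounds[OF p, of "Suc k" j] std_simplex_bounds[OF p, of 0 j]
      by (simp add: divide_inverse abs_mult mult_left_le_one_le)
  qed
  ultimately show thesis by (rule that)
qed

lemma stochastic_matrix_stationary_vector:
  fixes \<mu> :: "nat \<Rightarrow> nat \<Rightarrow> real"
  assumes "1 \<le> n" and "\<And>i. i < n \<Longrightarrow> \<mu> i \<in> std_simplex n"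
  shows "\<exists>\<nu>\<in>std_simplex n. \<forall>j<n. (\<Sum>i<n. \<nu> i * \<mu> i j) = \<nu> j"
proof -
  have "\<exists>c. c \<in> std_simplex n \<and>
      (\<forall>j<n. \<bar>(\<Sum>i<n. c i * \<mu> i j) - c j\<bar> \<le> inverse (real (Suc k)))" for k
    using stochastic_matrix_almost_stationary[of n \<mu> k] assms by blast
  then obtain c where c: "\<And>k. c k \<in> std_simplex n"
    "\<And>k j. j < n \<Longrightarrow> \<bar>(\<Sum>i<n. c k i * \<mu> i j) - c k j\<bar> \<le> inverse (real (Suc k))"
    by metis
  obtain \<nu> r where \<nu>: "\<nu> \<in> std_simplex n" "strict_mono r" "(c \<circ> r) \<longlonglongrightarrow> \<nu>"
    using seq_compactE[OF compact_imp_seq_compact[OF compact_std_simplex], of c] c(1) by metis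
  have coord: "(\<lambda>k. c (r k) j) \<longlonglongrightarrow> \<nu> j" for j
    using continuous_on_tendsto_compose[OF continuous_on_product_coordinates[of j] \<nu>(3)]
    by (simp add: o_def)
  have "(\<Sum>i<n. \<nu> i * \<mu> i j) = \<nu> j" if "j < n" for j
  proof -
    let ?d = "\<lambda>k. (\<Sum>i<n. c (r k) i * \<mu> i j) - c (r k) j"
    have "?d \<longlonglongrightarrow> (\<Sum>i<n. \<nu> i * \<mu> i j) - \<nu> j"
      by (intro tendsto_diff tendsto_sum tendsto_mult_right coord)
    moreover have "?d \<longlonglongrightarrow> 0"
    proof (rule Lim_null_comparison[OF always_eventually LIMSEQ_inverse_real_of_nat], rule allI)
      fix k
      have "inverse (real (Suc (r k))) \<le> inverse (real (Suc k))"
        using seq_suble[OF \<nu>(2), of k] by (simp add: le_imp_inverse_le)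
      then show "norm (?d k) \<le> inverse (real (Suc k))"
        using c(2)[OF that, of "r k"] unfolding real_norm_def by linarith
    qed
    ultimately show ?thesis using LIMSEQ_unique by fastforce
  qed
  then show ?thesis using \<nu>(1) by blast
qed

lemma finite_eq_image_lessThan_padded:
  assumes "finite S" "S \<noteq> {}" "card S \<le> n"
  obtains x where "S = x ` {..<n}"
proof -
  obtain x0 where "bij_betw x0 {0..<card S} S"
    using ex_bij_betw_nat_finite[OF assms(1)] by blast
  moreover have "0 < card S" using assms(1,2) by (simp add: card_gt_0_iff)
  ultimately obtain m where x0: "S = x0 ` {..<m}" and m: "0 < m" "m \<le> n"
    using assms(3) by (auto simp: bij_betw_def atLeast0LessThan)
  define x where "x i = (if i < m then x0 i else x0 0)" for i
  have image_x: "x ` {..<n} = x0 ` {..<m}"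
  proof
    show "x ` {..<n} \<subseteq> x0 ` {..<m}" using m by (auto simp: x_def)
    show "x0 ` {..<m} \<subseteq> x ` {..<n}"
    proof (rule image_subsetI)
      fix i assume "i \<in> {..<m}"
      then have "x0 i = x i" "i < n" using m by (auto simp: x_def)
      then show "x0 i \<in> x ` {..<n}" by auto
    qed
  qed
  show thesis by (rule that[of x]) (simp only: x0 image_x)
qed

lemma WNQ_self_map_has_fixed_point:
  fixes T :: "'a::real_vector \<Rightarrow> 'a set"
  assumes "finite S" "S \<noteq> {}"
    and into: "\<forall>x\<in>convex hull S. T x \<subseteq> convex hull S"
    and "WNQ (convex hull S) (convex hull S) T"
  shows "\<exists>z\<in>convex hull S. z \<in> T z"
proof -
  define n where "n = card S + 3"
  have "card S \<le> n" by (simp add: n_def)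
  then obtain x where S: "S = x ` {..<n}"
    using finite_eq_image_lessThan_padded[OF assms(1,2)] by blast
  define \<beta> where "\<beta> l = (\<Sum>j<n. l j *\<^sub>R x j)" for l
  have K: "convex hull S = \<beta> ` std_simplex n"
    unfolding S \<beta>_def by (rule convex_hull_image_lessThan)
  have x: "\<forall>i<n. x i \<in> convex hull S" using S by (auto intro: hull_inc)
  obtain y where y: "\<forall>i<n. y i \<in> T (x i)"
    and comb: "\<forall>l\<in>std_simplex n. (\<Sum>i<n. l i *\<^sub>R y i) \<in> T (\<beta> l)"
    using WNQ_imp_convex_combinations[OF assms(4) _ x] n_def unfolding \<beta>_def by auto
  have "\<exists>m. m \<in> std_simplex n \<and> y i = \<beta> m" if "i < n" for i
  proof -
    have "y i \<in> convex hull S" using y into x that by blast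
    then show ?thesis unfolding K by blast
  qed
  then obtain \<mu> where \<mu>: "\<And>i. i < n \<Longrightarrow> \<mu> i \<in> std_simplex n \<and> y i = \<beta> (\<mu> i)"
    by metis
  obtain \<nu> where \<nu>: "\<nu> \<in> std_simplex n" "\<forall>j<n. (\<Sum>i<n. \<nu> i * \<mu> i j) = \<nu> j"
    using stochastic_matrix_stationary_vector[of n \<mu>] \<mu> n_def by auto
  have "(\<Sum>i<n. \<nu> i *\<^sub>R y i) = (\<Sum>i<n. \<Sum>j<n. (\<nu> i * \<mu> i j) *\<^sub>R x j)"
    using \<mu> by (simp add: \<beta>_def scaleR_sum_right)
  also have "\<dots> = (\<Sum>j<n. (\<Sum>i<n. \<nu> i * \<mu> i j) *\<^sub>R x j)"
    by (subst sum.swap) (simp add: scaleR_sum_left)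
  also have "\<dots> = \<beta> \<nu>" using \<nu>(2) by (simp add: \<beta>_def)
  finally have "\<beta> \<nu> \<in> T (\<beta> \<nu>)" using comb \<nu>(1) by metis
  then show ?thesis using K \<nu>(1) by blast
qed

lemma tvs_continuous_on_linear_combination:
  fixes x :: "nat \<Rightarrow> 'a::{real_vector,topological_space}"
  assumes "tvs TYPE('a)"
  shows "continuous_on UNIV (\<lambda>l::nat \<Rightarrow> real. \<Sum>j<N. l j *\<^sub>R x j)"
proof (induction N)
  case 0
  then show ?case by simp
next
  case (Suc N)
  have add: "continuous_on UNIV (\<lambda>p::'a \<times> 'a. fst p + snd p)"
    and scale: "continuous_on UNIV (\<lambda>p::real \<times> 'a. fst p *\<^sub>R snd p)"
    using assms by (auto simp: tvs_def)
  have "continuous_on UNIV (\<lambda>l::nat \<Rightarrow> real. l N *\<^sub>R x N)"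
    using continuous_on_compose2[OF scale continuous_on_Pair[OF
          continuous_on_product_coordinates[of N] continuous_on_const[of UNIV "x N"]]]
    by simp
  then show ?case
    using continuous_on_compose2[OF add continuous_on_Pair[OF Suc.IH]] by simp
qed

lemma tvs_continuous_on_diff:
  assumes "tvs TYPE('a::{real_vector,topological_space})"
  shows "continuous_on UNIV (\<lambda>p::'a \<times> 'a. fst p - snd p)"
proof -
  have add: "continuous_on UNIV (\<lambda>p::'a \<times> 'a. fst p + snd p)"
    and scale: "continuous_on UNIV (\<lambda>p::real \<times> 'a. fst p *\<^sub>R snd p)"
    using assms by (auto simp: tvs_def)
  have "continuous_on UNIV (\<lambda>p::'a \<times> 'a. (\<lambda>q. fst q *\<^sub>R snd q) (-1::real, snd p))"
    by (rule continuous_on_compose2[OF scale]) (auto intro!: continuous_intros)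
  then have "continuous_on UNIV (\<lambda>p::'a \<times> 'a. (\<lambda>q. fst q + snd q) (fst p, (-1::real) *\<^sub>R snd p))"
    by (intro continuous_on_compose2[OF add]) (auto intro!: continuous_intros)
  then show ?thesis by simp
qed

lemma tvs_compact_convex_hull:
  fixes S :: "'a::{real_vector,topological_space} set"
  assumes "tvs TYPE('a)" "finite S"
  shows "compact (convex hull S)"
proof -
  obtain x where "bij_betw x {0..<card S} S"
    using ex_bij_betw_nat_finite[OF assms(2)] by blast
  then obtain m where "S = x ` {..<m}" by (auto simp: bij_betw_def atLeast0LessThan)
  then have "convex hull S = (\<lambda>l. \<Sum>j<m. l j *\<^sub>R x j) ` std_simplex m"
    by (simp add: convex_hull_image_lessThan)
  then show ?thesis
    using compact_continuous_image[OF continuous_on_subset[OF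
          tvs_continuous_on_linear_combination[OF assms(1)]] compact_std_simplex]
    by simp
qed

lemma tvs_separate_diagonal_point_from_graph:
  fixes z :: "'a::{real_vector,topological_space}"
  assumes "tvs TYPE('a)"
    and "(z, z) \<notin> closure (Gr K T)"
  obtains U V where "open U" "open V" "z \<in> U" "0 \<in> V"
    "\<And>a b v. a \<in> U \<Longrightarrow> a \<in> K \<Longrightarrow> b \<in> T a \<Longrightarrow> v \<in> V \<Longrightarrow> b + v \<notin> U"
proof -
  have "open (- closure (Gr K T))" "(z, z) \<in> - closure (Gr K T)" using assms(2) by auto
  then obtain A B where AB: "open A" "open B" "(z, z) \<in> A \<times> B" "A \<times> B \<subseteq> - closure (Gr K T)"
    by (rule open_prod_elim)
  have "open ((\<lambda>p::'a \<times> 'a. fst p - snd p) -` B)"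
    by (rule continuous_imp_open_vimage[OF tvs_continuous_on_diff[OF assms(1)] open_UNIV AB(2)])
      simp
  moreover have "(z, 0) \<in> (\<lambda>p::'a \<times> 'a. fst p - snd p) -` B" using AB(3) by simp
  ultimately obtain P V where PV: "open P" "open V" "(z, 0) \<in> P \<times> V"
    "P \<times> V \<subseteq> (\<lambda>p::'a \<times> 'a. fst p - snd p) -` B"
    by (rule open_prod_elim)
  show thesis
  proof (rule that[of "A \<inter> P" V])
    fix a b v assume a: "a \<in> A \<inter> P" "a \<in> K" "b \<in> T a" "v \<in> V"
    show "b + v \<notin> A \<inter> P"
    proof
      assume "b + v \<in> A \<inter> P"
      then have "(a, b) \<in> A \<times> B" using PV(4) a(1,4) by force
      moreover have "(a, b) \<in> closure (Gr K T)"
        using a closure_subset by (force simp: Gr_def)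
      ultimately show False using AB(4) by blast
    qed
  qed (use AB PV in auto)
qed

lemma tvs_compact_uniform_separation:
  fixes K :: "'a::{real_vector,topological_space} set"
  assumes "tvs TYPE('a)" "compact K"
    and "\<forall>z\<in>K. (z, z) \<notin> closure (Gr K T)"
  obtains V where "open V" "0 \<in> V"
    "\<forall>z\<in>K. (z, z) \<notin> closure (Gr K (TV K T V))"
proof -
  have "\<exists>U V. open U \<and> open V \<and> z \<in> U \<and> 0 \<in> V \<and>
      (\<forall>a b v. a \<in> U \<longrightarrow> a \<in> K \<longrightarrow> b \<in> T a \<longrightarrow> v \<in> V \<longrightarrow> b + v \<notin> U)" if "z \<in> K" for z
    using tvs_separate_diagonal_point_from_graph[OF assms(1), of z K T] assms(3) that by metis
  then obtain U V0 where UV: "\<And>z. z \<in> K \<Longrightarrow> open (U z) \<and> open (V0 z) \<and> z \<in> U z \<and> 0 \<in> V0 z \<and>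
      (\<forall>a b v. a \<in> U z \<longrightarrow> a \<in> K \<longrightarrow> b \<in> T a \<longrightarrow> v \<in> V0 z \<longrightarrow> b + v \<notin> U z)"
    by metis
  obtain F where F: "F \<subseteq> K" "finite F" "K \<subseteq> \<Union> (U ` F)"
    using compactE_image[OF assms(2), of K U] UV by blast
  define V where "V = \<Inter> (V0 ` F)"
  show thesis
  proof (rule that[of V])
    show "open V" "0 \<in> V" unfolding V_def using F UV by auto
    show "\<forall>z\<in>K. (z, z) \<notin> closure (Gr K (TV K T V))"
    proof (intro ballI notI)
      fix z assume "z \<in> K" "(z, z) \<in> closure (Gr K (TV K T V))"
      then obtain w where w: "w \<in> F" "z \<in> U w" using F by blast
      then have "open (U w \<times> U w)" using UV F by (auto intro: open_Times)
      moreover have "(z, z) \<in> (U w \<times> U w) \<inter> closure (Gr K (TV K T V))"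
        using \<open>(z, z) \<in> closure _\<close> w(2) by blast
      ultimately have "(U w \<times> U w) \<inter> Gr K (TV K T V) \<noteq> {}"
        using open_Int_closure_eq_empty by blast
      then obtain a c where "(a, c) \<in> U w \<times> U w" "(a, c) \<in> Gr K (TV K T V)"
        by blast
      then obtain b v where "a \<in> U w" "a \<in> K" "b \<in> T a" "v \<in> V" "b + v \<in> U w"
        by (auto simp: Gr_def TV_def)
      moreover have "v \<in> V0 w" using \<open>v \<in> V\<close> w(1) by (auto simp: V_def)
      ultimately show False using UV F w by blast
    qed
  qed
qed

theorem theorem5:
  fixes K :: "'a::{real_vector,topological_space} set"
    and T :: "'a \<Rightarrow> 'a set"
  assumes "tvs TYPE('a)"
    and "is_simplex K"
    and "\<forall>x\<in>K. T x \<subseteq> K"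
    and "\<forall>V. (\<exists>U. open U \<and> 0 \<in> U \<and> U \<subseteq> V) \<longrightarrow>
           (\<exists>TVV :: 'a \<Rightarrow> 'a set. (\<forall>x\<in>K. TVV x \<subseteq> K) \<and> WNQ K K TVV \<and>
               Gr K TVV \<subseteq> clGr K K (TV K T V))"
  shows "\<exists>x\<in>K. x \<in> Tbar K K T x"
proof (rule ccontr)
  assume "\<not> (\<exists>x\<in>K. x \<in> Tbar K K T x)"
  then have off_diagonal: "\<forall>z\<in>K. (z, z) \<notin> closure (Gr K T)"
    by (auto simp: Tbar_def clGr_def)
  obtain S where S: "finite S" "S \<noteq> {}" "K = convex hull S"
    using assms(2) unfolding is_simplex_def by blast
  obtain V where V: "open V" "0 \<in> V" "\<forall>z\<in>K. (z, z) \<notin> closure (Gr K (TV K T V))"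
    using tvs_compact_uniform_separation[OF assms(1) _ off_diagonal]
      tvs_compact_convex_hull[OF assms(1) S(1)] S(3) by blast
  obtain TVV where TVV: "\<forall>x\<in>K. TVV x \<subseteq> K" "WNQ K K TVV" "Gr K TVV \<subseteq> clGr K K (TV K T V)"
    using assms(4) V(1,2) by blast
  obtain z where "z \<in> K" "z \<in> TVV z"
    using WNQ_self_map_has_fixed_point[OF S(1,2)] TVV(1,2) S(3) by blast
  then have "(z, z) \<in> closure (Gr K (TV K T V))"
    using TVV(3) by (auto simp: Gr_def clGr_def)
  then show False using V(3) \<open>z \<in> K\<close> by blast
qed

end
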